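(* Let $\mathbf{X}=\{X_n\}_{n\ge0}$ be a real-valued integrable process adapted to a filtration $\{\mathcal{F}_n\}_{n\ge0}$ satisfying (D1), (D4), (A3) and (A4). Then $X_n$ possesses a finite limit a.e. If in addition $\mathbf{X}$ satisfies (D2), then $X_n\to0$ a.e.
   Context: Residuals: $\epsilon_n=X_n-E[X_n\mid\mathcal{F}_{n-1}]$, $n\ge1$; $M_{1,n}=\sum_{i=1}^n\epsilon_i$. $U_n=E[X_n\mid\mathcal{F}_{n-1}]\,I\{X_{n-1}=0\}$. (D1) For every $\delta>0$ there are constants $\alpha_n(\delta)\ge0$ with $\sum_n\alpha_n(\delta)<\infty$ such that, a.e. on $\{|X_{n-1}|>\delta\}$, $0\le E[X_n\mid\mathcal{F}_{n-1}]/X_{n-1}\le1+\alpha_n(\delta)$, for all $n\ge1$. (D2) For every pair $0<\delta_1<\delta_2<\infty$ there are constants $0\le k_n\le1$ (depending on $\delta_1,\delta_2$) with $\sum_n(1-k_n)=\infty$ such that, a.e. on $\{|X_{n-1}|\in(\delta_1,\delta_2)\}$, $0\le E[X_n\mid\mathcal{F}_{n-1}]/X_{n-1}\le k_n$, for all $n\ge1$. (D4) For every $\delta>0$ there is a constant $\kappa_\delta<\infty$ such that $|E[X_n\mid\mathcal{F}_{n-1}]|\le\kappa_\delta$ a.e. on $\{|X_{n-1}|\in(0,\delta]\}$ for all $n\ge1$, and $\lim_{\delta\downarrow0}\kappa_\delta=0$. (A3) $\lim_n U_n=0$ a.e. (A4) $M_{1,n}$ possesses a finite limit a.e. *)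

theory Defs
  imports "HOL-Probability.Probability"
begin

text \<open>Conditional mean E[X_{n+1} | F_n] (a version of it); index shifted by one
  relative to the paper: cmean M F X n corresponds to E[X_{n+1} | F_n].\<close>
definition cmean :: "'a measure \<Rightarrow> (nat \<Rightarrow> 'a measure) \<Rightarrow> (nat \<Rightarrow> 'a \<Rightarrow> real) \<Rightarrow> nat \<Rightarrow> 'a \<Rightarrow> real" where
  "cmean M F X n = real_cond_exp M (F n) (X (Suc n))"

definition resid :: "'a measure \<Rightarrow> (nat \<Rightarrow> 'a measure) \<Rightarrow> (nat \<Rightarrow> 'a \<Rightarrow> real) \<Rightarrow> nat \<Rightarrow> 'a \<Rightarrow> real" where
  "resid M F X n \<omega> = X (Suc n) \<omega> - cmean M F X n \<omega>"

definition Uproc :: "'a measure \<Rightarrow> (nat \<Rightarrow> 'a measure) \<Rightarrow> (nat \<Rightarrow> 'a \<Rightarrow> real) \<Rightarrow> nat \<Rightarrow> 'a \<Rightarrow> real" where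
  "Uproc M F X n \<omega> = cmean M F X n \<omega> * (if X n \<omega> = 0 then 1 else 0)"

definition condD1 :: "'a measure \<Rightarrow> (nat \<Rightarrow> 'a measure) \<Rightarrow> (nat \<Rightarrow> 'a \<Rightarrow> real) \<Rightarrow> bool" where
  "condD1 M F X \<longleftrightarrow> (\<forall>\<delta>>0. \<exists>\<alpha>::nat \<Rightarrow> real. (\<forall>n. \<alpha> n \<ge> 0) \<and> summable \<alpha> \<and>
     (\<forall>n. AE \<omega> in M. \<bar>X n \<omega>\<bar> > \<delta> \<longrightarrow>
        0 \<le> cmean M F X n \<omega> / X n \<omega> \<and> cmean M F X n \<omega> / X n \<omega> \<le> 1 + \<alpha> (Suc n)))"

definition condD2 :: "'a measure \<Rightarrow> (nat \<Rightarrow> 'a measure) \<Rightarrow> (nat \<Rightarrow> 'a \<Rightarrow> real) \<Rightarrow> bool" where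
  "condD2 M F X \<longleftrightarrow> (\<forall>\<delta>1 \<delta>2::real. 0 < \<delta>1 \<and> \<delta>1 < \<delta>2 \<longrightarrow>
     (\<exists>k::nat \<Rightarrow> real. (\<forall>n. 0 \<le> k n \<and> k n \<le> 1) \<and> \<not> summable (\<lambda>n. 1 - k n) \<and>
       (\<forall>n. AE \<omega> in M. \<delta>1 < \<bar>X n \<omega>\<bar> \<and> \<bar>X n \<omega>\<bar> < \<delta>2 \<longrightarrow>
          0 \<le> cmean M F X n \<omega> / X n \<omega> \<and> cmean M F X n \<omega> / X n \<omega> \<le> k (Suc n))))"

definition condD4 :: "'a measure \<Rightarrow> (nat \<Rightarrow> 'a measure) \<Rightarrow> (nat \<Rightarrow> 'a \<Rightarrow> real) \<Rightarrow> bool" where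
  "condD4 M F X \<longleftrightarrow> (\<exists>\<kappa>::real \<Rightarrow> real. (\<kappa> \<longlongrightarrow> 0) (at_right 0) \<and>
     (\<forall>\<delta>>0. \<forall>n. AE \<omega> in M. 0 < \<bar>X n \<omega>\<bar> \<and> \<bar>X n \<omega>\<bar> \<le> \<delta> \<longrightarrow> \<bar>cmean M F X n \<omega>\<bar> \<le> \<kappa> \<delta>))"

definition condA3 :: "'a measure \<Rightarrow> (nat \<Rightarrow> 'a measure) \<Rightarrow> (nat \<Rightarrow> 'a \<Rightarrow> real) \<Rightarrow> bool" where
  "condA3 M F X \<longleftrightarrow> (AE \<omega> in M. (\<lambda>n. Uproc M F X n \<omega>) \<longlonglongrightarrow> 0)"

definition condA4 :: "'a measure \<Rightarrow> (nat \<Rightarrow> 'a measure) \<Rightarrow> (nat \<Rightarrow> 'a \<Rightarrow> real) \<Rightarrow> bool" where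
  "condA4 M F X \<longleftrightarrow> (AE \<omega> in M. convergent (\<lambda>n. \<Sum>i<n. resid M F X i \<omega>))"

end

theory Submission
  imports Defs
begin

text \<open>
  Fix a path and write \<open>c n\<close> for \<open>E[X_{n+1} | F_n]\<close>. If \<open>r n\<close> is the tail of the convergent
  residual series, then \<open>y = X + r\<close> satisfies \<open>y (n+1) = c n + r n\<close> with \<open>r \<longlonglongrightarrow> 0\<close>, so up to a
  vanishing perturbation \<open>X_{n+1}\<close> equals its conditional mean. By (D1) a step multiplies \<open>\<bar>X\<bar>\<close> by
  at most \<open>1 + \<alpha>_n\<close> away from 0, and by (D4) and (A3) the mean is small where \<open>X\<close> is small; hence
  \<open>X\<close> is bounded. Given a level \<open>h\<close>, let \<open>T\<close> be the tails of \<open>\<Sum> \<alpha>_n\<close>: above the band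
  \<open>[-3h, 3h]\<close> the envelope \<open>y + K T\<close> is nonincreasing and below it \<open>y - K T\<close> is nondecreasing,
  while the band, once entered, is never left. So \<open>y\<close> is either eventually trapped in the band or
  convergent, which makes it Cauchy, and \<open>X = y - r\<close> converges.

  Under (D2) a limit \<open>L \<noteq> 0\<close> would give \<open>sgn L * (X_n - c n) \<ge> (1 - k_n) \<bar>L\<bar> / 2\<close> eventually,
  but \<open>X_n - c n = y n - y (n+1)\<close> is summable, contradicting \<open>\<Sum> (1 - k_n) = \<infinity>\<close>.

  Each condition survives, outside one null set, for the countably many thresholds \<open>1 / (m+1)\<close>,
  so the whole argument is pathwise.
\<close>

section \<open>Pathwise recursions\<close>

lemma residual_tail:
  fixes x c :: "nat \<Rightarrow> real"
  assumes "convergent (\<lambda>n. \<Sum>i<n. x (Suc i) - c i)"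
  obtains r where "r \<longlonglongrightarrow> 0" and "\<And>n. x (Suc n) + r (Suc n) = c n + r n"
proof
  let ?S = "\<lambda>n. \<Sum>i<n. x (Suc i) - c i"
  have "?S \<longlonglongrightarrow> lim ?S"
    using assms by (simp add: convergent_LIMSEQ_iff)
  then have "(\<lambda>n. lim ?S - ?S n) \<longlonglongrightarrow> lim ?S - lim ?S"
    by (intro tendsto_intros)
  then show "(\<lambda>n. lim ?S - ?S n) \<longlonglongrightarrow> 0"
    by simp
  show "x (Suc n) + (lim ?S - ?S (Suc n)) = c n + (lim ?S - ?S n)" for n
    by simp
qed

lemma tail_sum:
  fixes a :: "nat \<Rightarrow> real"
  assumes "\<And>n. 0 \<le> a n" and "summable a"
  obtains T where "T \<longlonglongrightarrow> 0" and "\<And>n. 0 \<le> T n" and "\<And>n. T n = a n + T (Suc n)"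
proof
  define T where "T n = suminf a - (\<Sum>i<n. a i)" for n
  have "T \<longlonglongrightarrow> suminf a - suminf a"
    unfolding T_def by (intro tendsto_intros summable_LIMSEQ assms)
  then show "T \<longlonglongrightarrow> 0"
    by simp
  show "0 \<le> T n" for n
    using sum_le_suminf[OF assms(2), of "{..<n}"] assms(1) by (simp add: T_def)
  show "T n = a n + T (Suc n)" for n
    by (simp add: T_def)
qed

lemma bounded_on_if_eventually_bounded_on:
  fixes c :: "nat \<Rightarrow> real"
  assumes "\<forall>\<^sub>F n in sequentially. P n \<longrightarrow> \<bar>c n\<bar> \<le> B"
  obtains B' where "\<And>n. P n \<Longrightarrow> \<bar>c n\<bar> \<le> B'"
proof -
  obtain N where N: "\<And>n. N \<le> n \<Longrightarrow> P n \<Longrightarrow> \<bar>c n\<bar> \<le> B"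
    using assms by (auto simp: eventually_sequentially)
  have "\<bar>c n\<bar> \<le> max B (\<Sum>i<N. \<bar>c i\<bar>)" if "P n" for n
  proof (cases "N \<le> n")
    case False
    then have "\<bar>c n\<bar> \<le> (\<Sum>i<N. \<bar>c i\<bar>)"
      by (intro member_le_sum) auto
    then show ?thesis by simp
  next
    case True
    then show ?thesis using N that by (meson max.coboundedI1)
  qed
  then show ?thesis using that by blast
qed

lemma abs_step_le_max:
  fixes t a y r \<eta> :: real
  assumes "0 \<le> t" "t \<le> 1 + a" "0 \<le> a" "\<bar>r\<bar> \<le> \<eta>"
  shows "\<bar>t * (y - r) + r\<bar> + \<eta> \<le> max (2 * \<eta>) ((1 + a) * (\<bar>y\<bar> + \<eta>))"
proof -
  have "t * (y - r) + r = t * y + (1 - t) * r"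
    by algebra
  then have "\<bar>t * (y - r) + r\<bar> \<le> \<bar>t * y\<bar> + \<bar>(1 - t) * r\<bar>"
    by (simp add: abs_triangle_ineq)
  also have "\<dots> \<le> t * \<bar>y\<bar> + \<bar>1 - t\<bar> * \<eta>"
    using assms by (simp add: abs_mult mult_left_mono)
  finally have step: "\<bar>t * (y - r) + r\<bar> \<le> t * \<bar>y\<bar> + \<bar>1 - t\<bar> * \<eta>" .
  let ?M = "max (2 * \<eta>) ((1 + a) * (\<bar>y\<bar> + \<eta>))"
  have y: "\<bar>y\<bar> + \<eta> \<le> ?M"
  proof -
    have "\<bar>y\<bar> + \<eta> \<le> (1 + a) * (\<bar>y\<bar> + \<eta>)"
      using assms by (simp add: algebra_simps)
    then show ?thesis by linarith
  qed
  show ?thesis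
  proof (cases "t \<le> 1")
    case True
    have "t * (\<bar>y\<bar> + \<eta>) + (1 - t) * (2 * \<eta>) \<le> t * ?M + (1 - t) * ?M"
      using True assms(1) y by (intro add_mono mult_left_mono) auto
    moreover have "\<bar>1 - t\<bar> = 1 - t"
      using True by simp
    ultimately show ?thesis
      using step by (simp add: algebra_simps)
  next
    case False
    have "t * (\<bar>y\<bar> + \<eta>) \<le> (1 + a) * (\<bar>y\<bar> + \<eta>)"
      using assms by (intro mult_right_mono) auto
    moreover have "\<bar>1 - t\<bar> * \<eta> + \<eta> = t * \<eta>"
      using False by (simp add: algebra_simps)
    moreover have "t * (\<bar>y\<bar> + \<eta>) = t * \<bar>y\<bar> + t * \<eta>"
      by (simp add: distrib_left)
    moreover have "(1 + a) * (\<bar>y\<bar> + \<eta>) \<le> ?M"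
      by simp
    ultimately show ?thesis
      using step by linarith
  qed
qed

lemma bounded_if_mean_ratio_bounded_outside:
  fixes x c r a :: "nat \<Rightarrow> real"
  assumes rec: "\<And>n. x (Suc n) + r (Suc n) = c n + r n"
    and r: "\<And>n. \<bar>r n\<bar> \<le> \<eta>"
    and "0 \<le> \<delta>" and small: "\<And>n. \<bar>x n\<bar> \<le> \<delta> \<Longrightarrow> \<bar>c n\<bar> \<le> B"
    and a: "\<And>n. 0 \<le> a n" "summable a"
    and ratio: "\<And>n. \<delta> < \<bar>x n\<bar> \<Longrightarrow> 0 \<le> c n / x n \<and> c n / x n \<le> 1 + a n"
  obtains K where "\<And>n. \<bar>x n\<bar> \<le> K"
proof -
  define C where "C = max (2 * \<eta>) (max (B + 2 * \<eta>) (\<bar>x 0 + r 0\<bar> + \<eta>))"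
  have "C \<ge> 0"
    using r[of 0] by (simp add: C_def)
  have growth: "\<bar>x n + r n\<bar> + \<eta> \<le> C * (\<Prod>i<n. 1 + a i)" for n
  proof (induction n)
    case 0
    then show ?case by (simp add: C_def)
  next
    case (Suc n)
    let ?Q = "\<Prod>i<n. 1 + a i"
    have "1 \<le> (\<Prod>i<Suc n. 1 + a i)"
      using a(1) by (intro prod_ge_1) (simp add: add_increasing2)
    then have C: "C \<le> C * (\<Prod>i<Suc n. 1 + a i)"
      using \<open>C \<ge> 0\<close> by (simp add: mult_le_cancel_left1)
    show ?case
    proof (cases "\<bar>x n\<bar> \<le> \<delta>")
      case True
      then have "\<bar>x (Suc n) + r (Suc n)\<bar> + \<eta> \<le> B + 2 * \<eta>"
        using small[of n] r[of n] rec[of n] by linarith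
      then show ?thesis using C by (simp add: C_def)
    next
      case False
      define t where "t = c n / x n"
      have t: "0 \<le> t" "t \<le> 1 + a n"
        using ratio[of n] False by (auto simp: t_def)
      have step: "x (Suc n) + r (Suc n) = t * ((x n + r n) - r n) + r n"
        using rec[of n] False \<open>0 \<le> \<delta>\<close> by (simp add: t_def)
      have "\<bar>x (Suc n) + r (Suc n)\<bar> + \<eta> \<le> max (2 * \<eta>) ((1 + a n) * (\<bar>x n + r n\<bar> + \<eta>))"
        unfolding step by (rule abs_step_le_max[OF t a(1) r])
      also have "\<dots> \<le> max C ((1 + a n) * (C * ?Q))"
        using Suc.IH a(1)[of n] by (intro max.mono mult_left_mono) (auto simp: C_def)
      also have "\<dots> \<le> C * (\<Prod>i<Suc n. 1 + a i)"
        using C by (simp add: algebra_simps)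
      finally show ?thesis .
    qed
  qed
  have "\<bar>x n\<bar> \<le> C * exp (suminf a)" for n
  proof -
    have "\<bar>x n\<bar> \<le> \<bar>x n + r n\<bar> + \<eta>"
      using r[of n] by linarith
    also have "\<dots> \<le> C * exp (\<Sum>i<n. a i)"
      using growth[of n] prod_le_exp_sum[of "{..<n}" a] a(1) \<open>C \<ge> 0\<close>
      by (smt (verit) mult_left_mono)
    also have "\<dots> \<le> C * exp (suminf a)"
      using sum_le_suminf[OF a(2), of "{..<n}"] a(1) \<open>C \<ge> 0\<close> by (simp add: mult_left_mono)
    finally show ?thesis .
  qed
  then show ?thesis using that by blast
qed

lemma bounded_if_mean_ratio_bounded:
  fixes x c r :: "nat \<Rightarrow> real"
  assumes rec: "\<And>n. x (Suc n) + r (Suc n) = c n + r n"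
    and r: "r \<longlonglongrightarrow> 0"
    and ratio: "\<And>\<delta>. 0 < \<delta> \<Longrightarrow> \<exists>a. (\<forall>n. 0 \<le> a n) \<and> summable a \<and>
        (\<forall>n. \<delta> < \<bar>x n\<bar> \<longrightarrow> 0 \<le> c n / x n \<and> c n / x n \<le> 1 + a n)"
    and small: "\<And>\<epsilon>. 0 < \<epsilon> \<Longrightarrow> \<exists>\<delta>>0. \<forall>\<^sub>F n in sequentially. \<bar>x n\<bar> \<le> \<delta> \<longrightarrow> \<bar>c n\<bar> \<le> \<epsilon>"
  obtains K where "\<And>n. \<bar>x n\<bar> \<le> K"
proof -
  obtain \<delta> where "0 < \<delta>" and small_1: "\<forall>\<^sub>F n in sequentially. \<bar>x n\<bar> \<le> \<delta> \<longrightarrow> \<bar>c n\<bar> \<le> 1"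
    using small[of 1] by auto
  obtain B where B: "\<And>n. \<bar>x n\<bar> \<le> \<delta> \<Longrightarrow> \<bar>c n\<bar> \<le> B"
    using bounded_on_if_eventually_bounded_on[OF small_1] by blast
  obtain a where a: "\<And>n. 0 \<le> a n" "summable a"
    and a_ratio: "\<And>n. \<delta> < \<bar>x n\<bar> \<Longrightarrow> 0 \<le> c n / x n \<and> c n / x n \<le> 1 + a n"
    using ratio[OF \<open>0 < \<delta>\<close>] by blast
  have "Bseq r"
    using r convergent_imp_Bseq convergent_def by blast
  then obtain \<eta> where "\<forall>n. norm (r n) \<le> \<eta>"
    using BseqE by blast
  then have \<eta>: "\<And>n. \<bar>r n\<bar> \<le> \<eta>"
    by simp
  show ?thesis
    by (rule bounded_if_mean_ratio_bounded_outside[OF rec \<eta> _ B a a_ratio]) (use \<open>0 < \<delta>\<close> that in auto)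
qed

lemma convergent_if_decreasing_while_above:
  fixes w :: "nat \<Rightarrow> real"
  assumes "b < w N"
    and step: "\<And>n. N \<le> n \<Longrightarrow> b < w n \<Longrightarrow> w (Suc n) \<le> w n \<and> b < w (Suc n)"
  shows "convergent w"
proof -
  have above: "b < w (k + N)" for k
  proof (induction k)
    case (Suc k)
    then show ?case using step[of "k + N"] by simp
  qed (use assms in simp)
  have "decseq (\<lambda>k. w (k + N))"
  proof (rule decseq_SucI)
    show "w (Suc k + N) \<le> w (k + N)" for k
      using step[of "k + N"] above[of k] by simp
  qed
  moreover have "\<forall>k. b \<le> w (k + N)"
    using above less_imp_le by blast
  ultimately obtain L where "(\<lambda>k. w (k + N)) \<longlonglongrightarrow> L"
    by (rule decseq_convergent)
  then show ?thesis
    using convergent_ignore_initial_segment convergent_def by blast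
qed

lemma band_or_convergent:
  fixes w z :: "nat \<Rightarrow> real"
  assumes stay: "\<And>n. N \<le> n \<Longrightarrow> -b \<le> z n \<Longrightarrow> w n \<le> b \<Longrightarrow> -b \<le> z (Suc n) \<and> w (Suc n) \<le> b"
    and above: "\<And>n. N \<le> n \<Longrightarrow> b < w n \<Longrightarrow> w (Suc n) \<le> w n \<and> -b \<le> z (Suc n)"
    and below: "\<And>n. N \<le> n \<Longrightarrow> z n < -b \<Longrightarrow> z n \<le> z (Suc n) \<and> w (Suc n) \<le> b"
  shows "(\<exists>N'. \<forall>n\<ge>N'. -b \<le> z n \<and> w n \<le> b) \<or> convergent w \<or> convergent z"
proof (cases "\<exists>N'\<ge>N. -b \<le> z N' \<and> w N' \<le> b")
  case True
  then obtain N' where N': "N \<le> N'" "-b \<le> z N' \<and> w N' \<le> b"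
    by blast
  have band: "-b \<le> z (k + N') \<and> w (k + N') \<le> b" for k
  proof (induction k)
    case (Suc k)
    then show ?case using stay[of "k + N'"] N'(1) by simp
  qed (use N' in simp)
  have "\<forall>n\<ge>N'. -b \<le> z n \<and> w n \<le> b"
  proof (intro allI impI)
    fix n assume "N' \<le> n"
    then show "-b \<le> z n \<and> w n \<le> b"
      using band[of "n - N'"] by simp
  qed
  then show ?thesis by blast
next
  case False
  then have outside: "b < w n \<or> z n < -b" if "N \<le> n" for n
    using that by (meson not_le)
  consider "b < w N" | "z N < -b"
    using outside[OF order.refl] by blast
  then show ?thesis
  proof cases
    case 1
    have "convergent w"
    proof (rule convergent_if_decreasing_while_above[of b w N])
      show "b < w N" by (rule 1)
      fix n assume "N \<le> n" "b < w n"
      then show "w (Suc n) \<le> w n \<and> b < w (Suc n)"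
        using above[of n] outside[of "Suc n"] by auto
    qed
    then show ?thesis by blast
  next
    case 2
    have "convergent (\<lambda>n. - z n)"
    proof (rule convergent_if_decreasing_while_above[of b _ N])
      show "b < - z N"
        using 2 by simp
      fix n assume "N \<le> n" "b < - z n"
      then show "- z (Suc n) \<le> - z n \<and> b < - z (Suc n)"
        using below[of n] outside[of "Suc n"] by auto
    qed
    then have "convergent z"
      using convergent_minus_iff by blast
    then show ?thesis by blast
  qed
qed

lemma mean_bounds_of_ratio:
  fixes x c a K :: real
  assumes "0 < x" "0 \<le> c / x" "c / x \<le> 1 + a" "0 \<le> a" "x \<le> K"
  shows "0 \<le> c \<and> c \<le> x + K * a"
proof -
  have "0 \<le> c"
    using assms(1,2) by (simp add: zero_le_divide_iff)
  moreover have "c \<le> x + a * x"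
    using assms(1,3) by (simp add: pos_divide_le_eq algebra_simps)
  moreover have "a * x \<le> a * K"
    using assms by (intro mult_left_mono) auto
  ultimately show ?thesis
    by (simp add: mult.commute)
qed

lemma band_or_convergent_mean_recursion:
  fixes x c r a T :: "nat \<Rightarrow> real"
  assumes rec: "\<And>n. x (Suc n) + r (Suc n) = c n + r n"
    and bound: "\<And>n. \<bar>x n\<bar> \<le> K"
    and a: "\<And>n. 0 \<le> a n"
    and ratio: "\<And>n. \<delta> < \<bar>x n\<bar> \<Longrightarrow> 0 \<le> c n / x n \<and> c n / x n \<le> 1 + a n"
    and T: "\<And>n. 0 \<le> T n" "\<And>n. T n = a n + T (Suc n)"
    and near: "\<And>n. N \<le> n \<Longrightarrow> \<bar>r n\<bar> \<le> h \<and> K * T n \<le> h \<and> (\<bar>x n\<bar> \<le> \<delta> \<longrightarrow> \<bar>c n\<bar> \<le> h)"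
    and "0 \<le> \<delta>" "\<delta> \<le> h"
  shows "(\<exists>N'. \<forall>n\<ge>N'. \<bar>x n + r n\<bar> \<le> 3 * h)
    \<or> convergent (\<lambda>n. x n + r n + K * T n) \<or> convergent (\<lambda>n. x n + r n - K * T n)"
proof -
  have "0 \<le> K"
    using bound[of 0] by linarith
  then have KT: "0 \<le> K * T n" "K * T n = K * a n + K * T (Suc n)" for n
    using T(1)[of n] by (simp, subst T(2), simp add: distrib_left)
  have pos: "0 \<le> c n \<and> c n \<le> x n + K * a n" if "\<delta> < x n" for n
    using mean_bounds_of_ratio[of "x n" "c n" "a n" K] ratio[of n] that \<open>0 \<le> \<delta>\<close> bound[of n] a[of n]
    by auto
  have neg: "x n - K * a n \<le> c n \<and> c n \<le> 0" if "x n < - \<delta>" for n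
    using mean_bounds_of_ratio[of "- x n" "- c n" "a n" K] ratio[of n] that \<open>0 \<le> \<delta>\<close> bound[of n] a[of n]
    by auto
  \<comment> \<open>\<open>K * T\<close> absorbs the growth factor \<open>1 + a n\<close>: \<open>?w\<close> cannot increase while \<open>x n > \<delta>\<close>,
    and \<open>?z\<close> cannot decrease while \<open>x n < -\<delta>\<close>\<close>
  let ?w = "\<lambda>n. x n + r n + K * T n" and ?z = "\<lambda>n. x n + r n - K * T n"
  have "(\<exists>N'. \<forall>n\<ge>N'. - (3 * h) \<le> ?z n \<and> ?w n \<le> 3 * h) \<or> convergent ?w \<or> convergent ?z"
  proof (rule band_or_convergent[of N])
    fix n assume n: "N \<le> n"
    have r: "- h \<le> r n" "r n \<le> h" and KTn: "K * T n \<le> h" "K * T (Suc n) \<le> h"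
      using near[OF n] near[of "Suc n"] n by (auto simp: abs_le_iff)
    note facts = rec[of n] r KTn KT[of n] KT[of "Suc n"] \<open>\<delta> \<le> h\<close>
    show "- (3 * h) \<le> ?z (Suc n) \<and> ?w (Suc n) \<le> 3 * h" if "- (3 * h) \<le> ?z n" "?w n \<le> 3 * h"
    proof -
      consider "\<delta> < x n" | "x n < - \<delta>" | "\<bar>x n\<bar> \<le> \<delta>"
        by linarith
      then show ?thesis
      proof cases
        case 3
        then have "- h \<le> c n" "c n \<le> h"
          using near[OF n] by (auto simp: abs_le_iff)
        then show ?thesis using that facts by linarith
      qed (use that pos[of n] neg[of n] facts in linarith)+
    qed
    show "?w (Suc n) \<le> ?w n \<and> - (3 * h) \<le> ?z (Suc n)" if "3 * h < ?w n"
    proof -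
      have "\<delta> < x n"
        using that facts by linarith
      then show ?thesis
        using pos[of n] facts by linarith
    qed
    show "?z n \<le> ?z (Suc n) \<and> ?w (Suc n) \<le> 3 * h" if "?z n < - (3 * h)"
    proof -
      have "x n < - \<delta>"
        using that facts by linarith
      then show ?thesis
        using neg[of n] facts by linarith
    qed
  qed
  moreover have "\<bar>x n + r n\<bar> \<le> 3 * h" if "- (3 * h) \<le> ?z n" "?w n \<le> 3 * h" for n
    using that KT(1)[of n] by linarith
  ultimately show ?thesis
    by blast
qed

lemma eventually_oscillation_le:
  fixes x c r a :: "nat \<Rightarrow> real"
  assumes rec: "\<And>n. x (Suc n) + r (Suc n) = c n + r n"
    and r: "r \<longlonglongrightarrow> 0"
    and bound: "\<And>n. \<bar>x n\<bar> \<le> K"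
    and a: "\<And>n. 0 \<le> a n" "summable a"
    and ratio: "\<And>n. \<delta> < \<bar>x n\<bar> \<Longrightarrow> 0 \<le> c n / x n \<and> c n / x n \<le> 1 + a n"
    and small: "\<forall>\<^sub>F n in sequentially. \<bar>x n\<bar> \<le> \<delta> \<longrightarrow> \<bar>c n\<bar> \<le> h"
    and "0 \<le> \<delta>" "\<delta> \<le> h" "0 < h"
  shows "\<exists>N. \<forall>p\<ge>N. \<forall>q\<ge>N. \<bar>(x p + r p) - (x q + r q)\<bar> \<le> 6 * h"
proof -
  obtain T where T: "T \<longlonglongrightarrow> 0" "\<And>n. 0 \<le> T n" "\<And>n. T n = a n + T (Suc n)"
    using tail_sum[OF a] by blast
  have KT: "(\<lambda>n. K * T n) \<longlonglongrightarrow> 0"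
    using tendsto_mult_right_zero[OF T(1)] .
  have "\<forall>\<^sub>F n in sequentially. \<bar>r n\<bar> \<le> h \<and> K * T n \<le> h \<and> (\<bar>x n\<bar> \<le> \<delta> \<longrightarrow> \<bar>c n\<bar> \<le> h)"
    using tendstoD[OF r \<open>0 < h\<close>] tendstoD[OF KT \<open>0 < h\<close>] small
    by eventually_elim auto
  then obtain N where N: "\<And>n. N \<le> n \<Longrightarrow> \<bar>r n\<bar> \<le> h \<and> K * T n \<le> h \<and> (\<bar>x n\<bar> \<le> \<delta> \<longrightarrow> \<bar>c n\<bar> \<le> h)"
    by (auto simp: eventually_sequentially)
  have KT': "convergent (\<lambda>n. K * T n)"
    using KT convergent_def by blast
  have "convergent (\<lambda>n. x n + r n)"
    if "convergent (\<lambda>n. x n + r n + K * T n) \<or> convergent (\<lambda>n. x n + r n - K * T n)"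
    using that convergent_diff[OF _ KT', of "\<lambda>n. x n + r n + K * T n"]
      convergent_add[OF _ KT', of "\<lambda>n. x n + r n - K * T n"]
    by auto
  with band_or_convergent_mean_recursion[where x=x and c=c and r=r and a=a and T=T and K=K
      and \<delta>=\<delta> and N=N and h=h, OF rec bound a(1) ratio T(2,3) N \<open>0 \<le> \<delta>\<close> \<open>\<delta> \<le> h\<close>]
  consider (band) N' where "\<And>n. N' \<le> n \<Longrightarrow> \<bar>x n + r n\<bar> \<le> 3 * h"
    | (convergent) "convergent (\<lambda>n. x n + r n)"
    by blast
  then show ?thesis
  proof cases
    case band
    show ?thesis
    proof (intro exI[of _ N'] allI impI)
      fix p q assume "N' \<le> p" "N' \<le> q"
      moreover have "\<bar>(x p + r p) - (x q + r q)\<bar> \<le> \<bar>x p + r p\<bar> + \<bar>x q + r q\<bar>"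
        by (rule abs_triangle_ineq4)
      ultimately show "\<bar>(x p + r p) - (x q + r q)\<bar> \<le> 6 * h"
        using band[of p] band[of q] by linarith
    qed
  next
    case convergent
    then obtain N' where "\<forall>p\<ge>N'. \<forall>q\<ge>N'. norm ((x p + r p) - (x q + r q)) < 6 * h"
      using CauchyD[OF convergent_Cauchy[OF convergent], of "6 * h"] \<open>0 < h\<close> by auto
    then show ?thesis
      by (intro exI[of _ N']) (simp add: less_imp_le)
  qed
qed

lemma convergent_if_mean_ratio_bounded:
  fixes x c :: "nat \<Rightarrow> real"
  assumes sums: "convergent (\<lambda>n. \<Sum>i<n. x (Suc i) - c i)"
    and ratio: "\<And>\<delta>. 0 < \<delta> \<Longrightarrow> \<exists>a. (\<forall>n. 0 \<le> a n) \<and> summable a \<and>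
        (\<forall>n. \<delta> < \<bar>x n\<bar> \<longrightarrow> 0 \<le> c n / x n \<and> c n / x n \<le> 1 + a n)"
    and small: "\<And>\<epsilon>. 0 < \<epsilon> \<Longrightarrow> \<exists>\<delta>>0. \<forall>\<^sub>F n in sequentially. \<bar>x n\<bar> \<le> \<delta> \<longrightarrow> \<bar>c n\<bar> \<le> \<epsilon>"
  shows "convergent x"
proof -
  obtain r where r: "r \<longlonglongrightarrow> 0" and rec: "\<And>n. x (Suc n) + r (Suc n) = c n + r n"
    using residual_tail[OF sums] by blast
  obtain K where bound: "\<And>n. \<bar>x n\<bar> \<le> K"
    using bounded_if_mean_ratio_bounded[OF rec r ratio small] by blast
  have "Cauchy (\<lambda>n. x n + r n)"
  proof (rule CauchyI)
    fix \<epsilon> :: real assume "0 < \<epsilon>"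
    define h where "h = \<epsilon> / 7"
    have "0 < h"
      using \<open>0 < \<epsilon>\<close> by (simp add: h_def)
    obtain \<delta>' where "0 < \<delta>'" and small_h: "\<forall>\<^sub>F n in sequentially. \<bar>x n\<bar> \<le> \<delta>' \<longrightarrow> \<bar>c n\<bar> \<le> h"
      using small[OF \<open>0 < h\<close>] by blast
    define \<delta> where "\<delta> = min \<delta>' h"
    have "0 < \<delta>" "\<delta> \<le> h"
      using \<open>0 < \<delta>'\<close> \<open>0 < h\<close> by (auto simp: \<delta>_def)
    have small_\<delta>: "\<forall>\<^sub>F n in sequentially. \<bar>x n\<bar> \<le> \<delta> \<longrightarrow> \<bar>c n\<bar> \<le> h"
      using small_h by eventually_elim (auto simp: \<delta>_def)
    obtain a where a: "\<And>n. 0 \<le> a n" "summable a"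
      and a_ratio: "\<And>n. \<delta> < \<bar>x n\<bar> \<Longrightarrow> 0 \<le> c n / x n \<and> c n / x n \<le> 1 + a n"
      using ratio[OF \<open>0 < \<delta>\<close>] by blast
    obtain N where N: "\<forall>p\<ge>N. \<forall>q\<ge>N. \<bar>(x p + r p) - (x q + r q)\<bar> \<le> 6 * h"
      using eventually_oscillation_le[OF rec r bound a a_ratio small_\<delta>] \<open>0 < \<delta>\<close> \<open>\<delta> \<le> h\<close> \<open>0 < h\<close>
      by auto
    show "\<exists>N. \<forall>p\<ge>N. \<forall>q\<ge>N. norm ((x p + r p) - (x q + r q)) < \<epsilon>"
    proof (intro exI[of _ N] allI impI)
      fix p q assume "N \<le> p" "N \<le> q"
      then show "norm ((x p + r p) - (x q + r q)) < \<epsilon>"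
        using N \<open>0 < \<epsilon>\<close> unfolding h_def real_norm_def by fastforce
    qed
  qed
  then have "convergent (\<lambda>n. (x n + r n) - r n)"
    using Cauchy_convergent_iff r convergent_def convergent_diff by blast
  then show ?thesis
    by simp
qed

lemma limit_zero_if_mean_ratio_contracting:
  fixes x c :: "nat \<Rightarrow> real"
  assumes sums: "convergent (\<lambda>n. \<Sum>i<n. x (Suc i) - c i)"
    and lim: "x \<longlonglongrightarrow> L"
    and contract: "\<And>\<delta>1 \<delta>2. 0 < \<delta>1 \<Longrightarrow> \<delta>1 < \<delta>2 \<Longrightarrow> \<exists>k. (\<forall>n. k n \<le> 1) \<and> \<not> summable (\<lambda>n. 1 - k n) \<and>
        (\<forall>n. \<delta>1 < \<bar>x n\<bar> \<and> \<bar>x n\<bar> < \<delta>2 \<longrightarrow> c n / x n \<le> k n)"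
  shows "L = 0"
proof (rule ccontr)
  assume "L \<noteq> 0"
  define \<delta> where "\<delta> = \<bar>L\<bar> / 2"
  define s where "s = sgn L"
  have "0 < \<delta>" "\<delta> < 2 * \<bar>L\<bar>" "\<bar>s\<bar> = 1" "s * L = \<bar>L\<bar>"
    using \<open>L \<noteq> 0\<close> by (auto simp: \<delta>_def s_def sgn_if)
  obtain k where k: "\<And>n. k n \<le> 1" and diverges: "\<not> summable (\<lambda>n. 1 - k n)"
    and k_ratio: "\<And>n. \<delta> < \<bar>x n\<bar> \<Longrightarrow> \<bar>x n\<bar> < 2 * \<bar>L\<bar> \<Longrightarrow> c n / x n \<le> k n"
    using contract[OF \<open>0 < \<delta>\<close> \<open>\<delta> < 2 * \<bar>L\<bar>\<close>] by blast
  obtain r where r: "r \<longlonglongrightarrow> 0" and rec: "\<And>n. x (Suc n) + r (Suc n) = c n + r n"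
    using residual_tail[OF sums] by blast
  \<comment> \<open>\<open>x n - c n\<close> telescopes along the convergent sequence \<open>x + r\<close>\<close>
  have "summable (\<lambda>n. (x n + r n) - (x (Suc n) + r (Suc n)))"
    using telescope_summable'[OF tendsto_add[OF lim r]] .
  then have summable_diff: "summable (\<lambda>n. s * (x n - c n))"
    using rec by (simp add: summable_cmult_iff)
  have "\<forall>\<^sub>F n in sequentially. \<delta> < s * x n \<and> \<bar>x n\<bar> < 2 * \<bar>L\<bar>"
  proof -
    have "(\<lambda>n. s * x n) \<longlonglongrightarrow> \<bar>L\<bar>"
      using tendsto_mult_left[OF lim, of s] \<open>s * L = \<bar>L\<bar>\<close> by simp
    moreover have "\<delta> < \<bar>L\<bar>" "\<bar>L\<bar> < 2 * \<bar>L\<bar>"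
      using \<open>L \<noteq> 0\<close> by (auto simp: \<delta>_def)
    ultimately show ?thesis
      using eventually_conj[OF order_tendstoD(1) order_tendstoD(2)[OF tendsto_rabs[OF lim]]] by blast
  qed
  then have "\<forall>\<^sub>F n in sequentially. norm (\<delta> * (1 - k n)) \<le> s * (x n - c n)"
  proof eventually_elim
    case (elim n)
    have "\<bar>x n\<bar> = \<bar>s * x n\<bar>"
      using \<open>\<bar>s\<bar> = 1\<close> by (simp add: abs_mult)
    also have "\<dots> = s * x n"
      using elim \<open>0 < \<delta>\<close> by simp
    finally have "\<bar>x n\<bar> = s * x n" .
    then have "x n \<noteq> 0" and "c n / x n \<le> k n"
      using elim k_ratio[of n] \<open>0 < \<delta>\<close> by auto
    then have "s * (x n - c n) = (1 - c n / x n) * (s * x n)"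
      by (simp add: field_simps)
    also have "\<dots> \<ge> (1 - k n) * \<delta>"
      using \<open>c n / x n \<le> k n\<close> k[of n] elim \<open>0 < \<delta>\<close> by (intro mult_mono) auto
    finally show ?case
      using k[of n] \<open>0 < \<delta>\<close> by (simp add: mult.commute)
  qed
  then have "summable (\<lambda>n. \<delta> * (1 - k n))"
    by (rule summable_comparison_test_ev[OF _ summable_diff])
  with diverges \<open>0 < \<delta>\<close> show False
    by simp
qed

section \<open>Almost sure reduction\<close>

lemma AE_mean_ratio_bounded_if_condD1:
  assumes "condD1 M F X"
  shows "AE \<omega> in M. \<forall>\<delta>>0. \<exists>a. (\<forall>n. 0 \<le> a n) \<and> summable a \<and>
    (\<forall>n. \<delta> < \<bar>X n \<omega>\<bar> \<longrightarrow> 0 \<le> cmean M F X n \<omega> / X n \<omega> \<and> cmean M F X n \<omega> / X n \<omega> \<le> 1 + a n)"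
proof -
  have "\<forall>m. \<exists>\<alpha>::nat \<Rightarrow> real. (\<forall>n. 0 \<le> \<alpha> n) \<and> summable \<alpha> \<and>
      (\<forall>n. AE \<omega> in M. inverse (real (Suc m)) < \<bar>X n \<omega>\<bar> \<longrightarrow>
        0 \<le> cmean M F X n \<omega> / X n \<omega> \<and> cmean M F X n \<omega> / X n \<omega> \<le> 1 + \<alpha> (Suc n))"
    (is "\<forall>m. ?P m")
  proof
    show "?P m" for m
      using assms inverse_Suc[where 'a=real] unfolding condD1_def by blast
  qed
  then obtain \<alpha> :: "nat \<Rightarrow> nat \<Rightarrow> real" where \<alpha>: "\<forall>m. (\<forall>n. 0 \<le> \<alpha> m n) \<and> summable (\<alpha> m) \<and>
      (\<forall>n. AE \<omega> in M. inverse (real (Suc m)) < \<bar>X n \<omega>\<bar> \<longrightarrow>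
        0 \<le> cmean M F X n \<omega> / X n \<omega> \<and> cmean M F X n \<omega> / X n \<omega> \<le> 1 + \<alpha> m (Suc n))"
    by (rule choice[THEN exE])
  then have \<alpha>_nonneg: "\<And>m n. 0 \<le> \<alpha> m n" and \<alpha>_summable: "\<And>m. summable (\<alpha> m)"
    by blast+
  have "AE \<omega> in M. \<forall>m n. inverse (real (Suc m)) < \<bar>X n \<omega>\<bar> \<longrightarrow>
      0 \<le> cmean M F X n \<omega> / X n \<omega> \<and> cmean M F X n \<omega> / X n \<omega> \<le> 1 + \<alpha> m (Suc n)"
    using \<alpha> by (simp add: AE_all_countable)
  then show ?thesis
  proof eventually_elim
    case (elim \<omega>)
    show ?case
    proof (intro allI impI)
      fix \<delta> :: real assume "0 < \<delta>"
      then obtain m where m: "inverse (real (Suc m)) < \<delta>"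
        using reals_Archimedean by blast
      show "\<exists>a. (\<forall>n. 0 \<le> a n) \<and> summable a \<and> (\<forall>n. \<delta> < \<bar>X n \<omega>\<bar> \<longrightarrow>
          0 \<le> cmean M F X n \<omega> / X n \<omega> \<and> cmean M F X n \<omega> / X n \<omega> \<le> 1 + a n)"
      proof (intro exI[of _ "\<lambda>n. \<alpha> m (Suc n)"] conjI allI impI)
        show "summable (\<lambda>n. \<alpha> m (Suc n))"
          using \<alpha>_summable[of m] by (simp only: summable_Suc_iff)
        fix n
        show "0 \<le> \<alpha> m (Suc n)"
          by (rule \<alpha>_nonneg)
        assume "\<delta> < \<bar>X n \<omega>\<bar>"
        then have "inverse (real (Suc m)) < \<bar>X n \<omega>\<bar>"
          using m by linarith
        then show "0 \<le> cmean M F X n \<omega> / X n \<omega>" "cmean M F X n \<omega> / X n \<omega> \<le> 1 + \<alpha> m (Suc n)"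
          using elim by blast+
      qed
    qed
  qed
qed

lemma AE_mean_small_if_condD4_condA3:
  assumes "condD4 M F X" and "condA3 M F X"
  shows "AE \<omega> in M. \<forall>\<epsilon>>0. \<exists>\<delta>>0. \<forall>\<^sub>F n in sequentially. \<bar>X n \<omega>\<bar> \<le> \<delta> \<longrightarrow> \<bar>cmean M F X n \<omega>\<bar> \<le> \<epsilon>"
proof -
  obtain \<kappa> where \<kappa>: "(\<kappa> \<longlongrightarrow> 0) (at_right 0)"
    and AE_\<kappa>: "\<And>\<delta> n. 0 < \<delta> \<Longrightarrow>
      AE \<omega> in M. 0 < \<bar>X n \<omega>\<bar> \<and> \<bar>X n \<omega>\<bar> \<le> \<delta> \<longrightarrow> \<bar>cmean M F X n \<omega>\<bar> \<le> \<kappa> \<delta>"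
    using assms(1) unfolding condD4_def by blast
  have \<kappa>_seq: "(\<lambda>m. \<kappa> (inverse (real (Suc m)))) \<longlonglongrightarrow> 0"
    using filterlim_compose[OF \<kappa> tendsto_imp_filterlim_at_right[OF LIMSEQ_inverse_real_of_nat]]
    by simp
  have "AE \<omega> in M. \<forall>m n. 0 < \<bar>X n \<omega>\<bar> \<and> \<bar>X n \<omega>\<bar> \<le> inverse (real (Suc m)) \<longrightarrow>
      \<bar>cmean M F X n \<omega>\<bar> \<le> \<kappa> (inverse (real (Suc m)))"
    using AE_\<kappa> by (simp add: AE_all_countable)
  then show ?thesis
    using assms(2) unfolding condA3_def Uproc_def
  proof eventually_elim
    case (elim \<omega>)
    note bound = elim(1) and U = elim(2)
    show ?case
    proof (intro allI impI)
      fix \<epsilon> :: real assume "0 < \<epsilon>"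
      obtain m where m: "\<bar>\<kappa> (inverse (real (Suc m)))\<bar> < \<epsilon>"
        using eventually_happens'[OF _ tendstoD[OF \<kappa>_seq \<open>0 < \<epsilon>\<close>]] by auto
      have "\<forall>\<^sub>F n in sequentially. \<bar>cmean M F X n \<omega> * (if X n \<omega> = 0 then 1 else 0)\<bar> < \<epsilon>"
        using tendstoD[OF U \<open>0 < \<epsilon>\<close>] by simp
      then have "\<forall>\<^sub>F n in sequentially.
          \<bar>X n \<omega>\<bar> \<le> inverse (real (Suc m)) \<longrightarrow> \<bar>cmean M F X n \<omega>\<bar> \<le> \<epsilon>"
      proof eventually_elim
        case (elim n)
        show ?case
          using elim bound[THEN spec[of _ m], THEN spec[of _ n]] m by (cases "X n \<omega> = 0") auto
      qed
      then show "\<exists>\<delta>>0. \<forall>\<^sub>F n in sequentially. \<bar>X n \<omega>\<bar> \<le> \<delta> \<longrightarrow> \<bar>cmean M F X n \<omega>\<bar> \<le> \<epsilon>"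
        by (intro exI[of _ "inverse (real (Suc m))"]) simp
    qed
  qed
qed

lemma AE_mean_ratio_contracting_if_condD2:
  assumes "condD2 M F X"
  shows "AE \<omega> in M. \<forall>\<delta>1 \<delta>2. 0 < \<delta>1 \<longrightarrow> \<delta>1 < \<delta>2 \<longrightarrow>
    (\<exists>k. (\<forall>n. k n \<le> 1) \<and> \<not> summable (\<lambda>n. 1 - k n) \<and>
      (\<forall>n. \<delta>1 < \<bar>X n \<omega>\<bar> \<and> \<bar>X n \<omega>\<bar> < \<delta>2 \<longrightarrow> cmean M F X n \<omega> / X n \<omega> \<le> k n))"
proof -
  have "\<forall>m. \<exists>k::nat \<Rightarrow> real. (\<forall>n. 0 \<le> k n \<and> k n \<le> 1) \<and> \<not> summable (\<lambda>n. 1 - k n) \<and>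
      (\<forall>n. AE \<omega> in M. inverse (real (Suc m)) < \<bar>X n \<omega>\<bar> \<and> \<bar>X n \<omega>\<bar> < real m + 2 \<longrightarrow>
        0 \<le> cmean M F X n \<omega> / X n \<omega> \<and> cmean M F X n \<omega> / X n \<omega> \<le> k (Suc n))"
    (is "\<forall>m. ?P m")
  proof
    fix m
    have "inverse (real (Suc m)) \<le> 1"
      using le_imp_inverse_le[of 1 "real (Suc m)"] by simp
    then have "0 < inverse (real (Suc m)) \<and> inverse (real (Suc m)) < real m + 2"
      by simp
    then show "?P m"
      using assms unfolding condD2_def by blast
  qed
  then obtain k :: "nat \<Rightarrow> nat \<Rightarrow> real" where k: "\<forall>m. (\<forall>n. 0 \<le> k m n \<and> k m n \<le> 1) \<and>
      \<not> summable (\<lambda>n. 1 - k m n) \<and>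
      (\<forall>n. AE \<omega> in M. inverse (real (Suc m)) < \<bar>X n \<omega>\<bar> \<and> \<bar>X n \<omega>\<bar> < real m + 2 \<longrightarrow>
        0 \<le> cmean M F X n \<omega> / X n \<omega> \<and> cmean M F X n \<omega> / X n \<omega> \<le> k m (Suc n))"
    by (rule choice[THEN exE])
  then have k_le_1: "\<And>m n. k m n \<le> 1" and k_diverges: "\<And>m. \<not> summable (\<lambda>n. 1 - k m n)"
    by blast+
  have "AE \<omega> in M. inverse (real (Suc m)) < \<bar>X n \<omega>\<bar> \<and> \<bar>X n \<omega>\<bar> < real m + 2 \<longrightarrow>
      cmean M F X n \<omega> / X n \<omega> \<le> k m (Suc n)" for m n
    using k[rule_format, of m, THEN conjunct2, THEN conjunct2, rule_format, of n]
    by eventually_elim blast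
  then have "AE \<omega> in M. \<forall>m n. inverse (real (Suc m)) < \<bar>X n \<omega>\<bar> \<and> \<bar>X n \<omega>\<bar> < real m + 2 \<longrightarrow>
      cmean M F X n \<omega> / X n \<omega> \<le> k m (Suc n)"
    by (simp add: AE_all_countable)
  then show ?thesis
  proof eventually_elim
    case (elim \<omega>)
    show ?case
    proof (intro allI impI)
      fix \<delta>1 \<delta>2 :: real assume "0 < \<delta>1" "\<delta>1 < \<delta>2"
      obtain m1 where m1: "inverse (real (Suc m1)) < \<delta>1"
        using reals_Archimedean \<open>0 < \<delta>1\<close> by blast
      obtain m2 where m2: "\<delta>2 < real m2"
        using reals_Archimedean2 by blast
      have "inverse (real (Suc (m1 + m2))) \<le> inverse (real (Suc m1))"
        by (intro le_imp_inverse_le) auto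
      moreover have "real m2 \<le> real (m1 + m2) + 2"
        by simp
      ultimately have interval: "inverse (real (Suc (m1 + m2))) < \<bar>X n \<omega>\<bar> \<and> \<bar>X n \<omega>\<bar> < real (m1 + m2) + 2"
        if "\<delta>1 < \<bar>X n \<omega>\<bar>" "\<bar>X n \<omega>\<bar> < \<delta>2" for n
        using that m1 m2 by linarith+
      show "\<exists>k. (\<forall>n. k n \<le> 1) \<and> \<not> summable (\<lambda>n. 1 - k n) \<and>
          (\<forall>n. \<delta>1 < \<bar>X n \<omega>\<bar> \<and> \<bar>X n \<omega>\<bar> < \<delta>2 \<longrightarrow> cmean M F X n \<omega> / X n \<omega> \<le> k n)"
      proof (intro exI[of _ "\<lambda>n. k (m1 + m2) (Suc n)"] conjI allI impI)
        show "\<not> summable (\<lambda>n. 1 - k (m1 + m2) (Suc n))"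
          using k_diverges[of "m1 + m2"] summable_Suc_iff[of "\<lambda>n. 1 - k (m1 + m2) n"] by simp
        fix n
        show "k (m1 + m2) (Suc n) \<le> 1"
          by (rule k_le_1)
        assume "\<delta>1 < \<bar>X n \<omega>\<bar> \<and> \<bar>X n \<omega>\<bar> < \<delta>2"
        then show "cmean M F X n \<omega> / X n \<omega> \<le> k (m1 + m2) (Suc n)"
          using elim interval[of n] by blast
      qed
    qed
  qed
qed

theorem theorem5:
  fixes M :: "'a measure" and F :: "nat \<Rightarrow> 'a measure" and X :: "nat \<Rightarrow> 'a \<Rightarrow> real"
  assumes "prob_space M"
    and "\<And>n. subalgebra M (F n)"
    and "\<And>m n. m \<le> n \<Longrightarrow> sets (F m) \<subseteq> sets (F n)"
    and "\<And>n. X n \<in> borel_measurable (F n)"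
    and "\<And>n. integrable M (X n)"
    and "condD1 M F X" and "condD4 M F X" and "condA3 M F X" and "condA4 M F X"
  shows "(AE \<omega> in M. \<exists>L::real. (\<lambda>n. X n \<omega>) \<longlonglongrightarrow> L)
         \<and> (condD2 M F X \<longrightarrow> (AE \<omega> in M. (\<lambda>n. X n \<omega>) \<longlonglongrightarrow> 0))"
proof -
  have A4: "AE \<omega> in M. convergent (\<lambda>n. \<Sum>i<n. X (Suc i) \<omega> - cmean M F X i \<omega>)"
    using assms(9) unfolding condA4_def resid_def .
  have convergent: "AE \<omega> in M. convergent (\<lambda>n. X n \<omega>)"
    using A4 AE_mean_ratio_bounded_if_condD1[OF assms(6)] AE_mean_small_if_condD4_condA3[OF assms(7,8)]
  proof eventually_elim
    case (elim \<omega>)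
    show ?case
      by (rule convergent_if_mean_ratio_bounded[OF elim(1)]) (use elim(2,3) in blast)+
  qed
  moreover have "AE \<omega> in M. (\<lambda>n. X n \<omega>) \<longlonglongrightarrow> 0" if "condD2 M F X"
    using A4 convergent AE_mean_ratio_contracting_if_condD2[OF that]
  proof eventually_elim
    case (elim \<omega>)
    then obtain L where L: "(\<lambda>n. X n \<omega>) \<longlonglongrightarrow> L"
      unfolding convergent_def by blast
    moreover have "L = 0"
      by (rule limit_zero_if_mean_ratio_contracting[OF elim(1) L]) (use elim(3) in blast)
    ultimately show ?case
      by simp
  qed
  ultimately show ?thesis
    unfolding convergent_def by blast
qed

end
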